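(* Let $G$ be a locally compact abelian group and let $\varphi\in B(G)$ be real-valued and odd (i.e. $\varphi(-x)=-\varphi(x)$ for all $x\in G$). If $\|\varphi\|_{B(G)}\le 1$, then there exists a characteristic function $f$ on $G$ such that $\operatorname{Im} f(x)=\varphi(x)$ for all $x\in G$.
   Context: $\widehat{G}$ denotes the dual group of $G$ (continuous homomorphisms $\gamma:G\to\{z\in\mathbb{C}:|z|=1\}$), written additively, with $(x,\gamma)=\gamma(x)$. $M(\widehat{G})$ is the Banach algebra of bounded regular complex Borel measures on $\widehat{G}$ with the total variation norm. For $\omega\in M(\widehat{G})$, its Fourier–Stieltjes transform is $\widehat{\omega}(x)=\int_{\widehat{G}}\overline{(x,\gamma)}\,d\omega(\gamma)$, $x\in G$. $B(G)=\{\widehat{\omega}:\omega\in M(\widehat{G})\}$ is the Fourier–Stieltjes algebra, normed by $\|\widehat{\omega}\|_{B(G)}=\|\omega\|_{M(\widehat{G})}$. A characteristic function on $G$ is a function of the form $\widehat{\mu}$ with $\mu$ a nonnegative measure in $M(\widehat{G})$ with $\|\mu\|=1$ (equivalently, by Bochner's theorem, a continuous positive definite function $f$ on $G$ with $f(0)=1$). *)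

theory Defs
  imports "HOL-Analysis.Analysis" "HOL-Probability.Probability"
begin

definition dual_group :: "('g::topological_ab_group_add \<Rightarrow> complex) set" where
  "dual_group = {\<gamma>. continuous_on UNIV \<gamma> \<and> (\<forall>x y. \<gamma> (x + y) = \<gamma> x * \<gamma> y) \<and> (\<forall>x. cmod (\<gamma> x) = 1)}"

definition dual_topology :: "('g::topological_ab_group_add \<Rightarrow> complex) topology" where
  "dual_topology = topology_generated_by
     {{\<gamma> \<in> dual_group. \<gamma> ` K \<subseteq> U} | K U. compact K \<and> open U}"

definition dual_borel_measure :: "('g::topological_ab_group_add \<Rightarrow> complex) measure \<Rightarrow> bool" where
  "dual_borel_measure M \<longleftrightarrow> space M = dual_group \<and>
     sets M = sigma_sets dual_group {U. openin dual_topology U}"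

definition dual_regular :: "('g::topological_ab_group_add \<Rightarrow> complex) measure \<Rightarrow> bool" where
  "dual_regular M \<longleftrightarrow> (\<forall>A \<in> sets M.
     emeasure M A = (INF U \<in> {U. openin dual_topology U \<and> A \<subseteq> U}. emeasure M U) \<and>
     emeasure M A = (SUP K \<in> {K. compactin dual_topology K \<and> K \<subseteq> A}. emeasure M K))"

text \<open>Fourier--Stieltjes transform of the complex measure h d|omega| (polar decomposition:
  M = |omega| a finite positive regular Borel measure, |h| = 1).\<close>
definition fourier_stieltjes ::
  "('g::topological_ab_group_add \<Rightarrow> complex) measure \<Rightarrow> (('g \<Rightarrow> complex) \<Rightarrow> complex) \<Rightarrow> 'g \<Rightarrow> complex" where
  "fourier_stieltjes M h x = (LINT \<gamma>|M. cnj (\<gamma> x) * h \<gamma>)"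

definition B_norm_le :: "('g::topological_ab_group_add \<Rightarrow> complex) \<Rightarrow> real \<Rightarrow> bool" where
  "B_norm_le \<phi> c \<longleftrightarrow> (\<exists>M h. dual_borel_measure M \<and> dual_regular M \<and> finite_measure M \<and>
     h \<in> borel_measurable M \<and> (\<forall>\<gamma> \<in> space M. cmod (h \<gamma>) = 1) \<and>
     measure M (space M) \<le> c \<and> (\<forall>x. \<phi> x = fourier_stieltjes M h x))"

definition characteristic_function :: "('g::topological_ab_group_add \<Rightarrow> complex) \<Rightarrow> bool" where
  "characteristic_function f \<longleftrightarrow> (\<exists>\<mu>. dual_borel_measure \<mu> \<and> dual_regular \<mu> \<and>
     emeasure \<mu> (space \<mu>) = 1 \<and> (\<forall>x. f x = fourier_stieltjes \<mu> (\<lambda>_. 1) x))"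

end

theory Submission
  imports Defs
begin

text \<open>
  Write \<open>\<phi>\<close> as the transform of \<open>h |\<omega>|\<close> with \<open>|h| = 1\<close> and \<open>\<parallel>\<omega>\<parallel> \<le> 1\<close>. As \<open>\<phi>\<close> is real and odd,
  \<open>\<phi>(x) = (\<phi>(x) - \<phi>(-x))/2 = \<integral> Im h(\<gamma>) Im \<gamma>(x) d|\<omega>|(\<gamma>)\<close>. With \<open>s = Im h\<close>, which takes values
  in \<open>[-1, 1]\<close>, the measure
  \<open>\<mu> = ((1 - s)/2) |\<omega>| + cnj\<^sub>*(((1 + s)/2) |\<omega>|) + (1 - \<parallel>\<omega>\<parallel>) \<delta>\<^sub>1\<close>
  is a probability measure, and since \<open>\<gamma> \<mapsto> Im \<gamma>(x)\<close> changes sign under conjugation and vanishes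
  at the trivial character, \<open>Im \<mu>\<^sup>\<and>(x) = \<integral> s(\<gamma>) Im \<gamma>(x) d|\<omega>|(\<gamma>) = \<phi>(x)\<close>. Regularity of \<open>\<mu>\<close> is
  proved through an \<open>\<epsilon>\<close>-form of regularity that is stable under densities bounded by 1, images
  under homeomorphisms, point masses and finite sums.
\<close>

section \<open>Borel measures and regularity\<close>

definition borel_of :: "'a topology \<Rightarrow> 'a measure" where
  "borel_of X = sigma (topspace X) {U. openin X U}"

lemma sets_borel_of: "sets (borel_of X) = sigma_sets (topspace X) {U. openin X U}"
  unfolding borel_of_def by (rule sets_measure_of) (auto dest: openin_subset)

lemma space_borel_of: "space (borel_of X) = topspace X"
  unfolding borel_of_def by (rule space_measure_of) (auto dest: openin_subset)

lemma borel_of_euclidean: "borel_of euclidean = borel"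
  unfolding borel_of_def borel_def by simp

lemma openin_in_sets_borel_of:
  assumes "sets N = sets (borel_of X)" "openin X U"
  shows "U \<in> sets N"
  using assms by (simp add: sets_borel_of)

lemma compactin_in_sets_borel_of:
  assumes N: "sets N = sets (borel_of X)" and "Hausdorff_space X" "compactin X K"
  shows "K \<in> sets N"
proof -
  have "openin X (topspace X - K)"
    using assms compactin_imp_closedin by (auto simp: closedin_def)
  then have "topspace X - (topspace X - K) \<in> sets N"
    using N sets_eq_imp_space_eq[OF N] by (metis openin_in_sets_borel_of sets.compl_sets space_borel_of)
  moreover have "K \<subseteq> topspace X"
    using assms compactin_subset_topspace by blast
  ultimately show ?thesis
    by (simp add: double_diff)
qed

lemma continuous_map_measurable_borel_of:
  assumes "continuous_map X Y f"
  shows "f \<in> measurable (borel_of X) (borel_of Y)"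
  unfolding borel_of_def
proof (rule measurable_measure_of)
  show "{U. openin Y U} \<subseteq> Pow (topspace Y)"
    by (auto dest: openin_subset)
  show "f \<in> space (sigma (topspace X) {U. openin X U}) \<rightarrow> topspace Y"
    using assms by (auto simp: space_borel_of[unfolded borel_of_def] continuous_map_def)
  fix U assume "U \<in> {U. openin Y U}"
  then have "openin X {x \<in> topspace X. f x \<in> U}"
    using assms by (simp add: openin_continuous_map_preimage)
  moreover have "{x \<in> topspace X. f x \<in> U} = f -` U \<inter> space (sigma (topspace X) {U. openin X U})"
    by (auto simp: space_borel_of[unfolded borel_of_def])
  ultimately show "f -` U \<inter> space (sigma (topspace X) {U. openin X U})
      \<in> sets (sigma (topspace X) {U. openin X U})"
    by (metis borel_of_def openin_in_sets_borel_of)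
qed

definition regular_measure :: "'a topology \<Rightarrow> 'a measure \<Rightarrow> bool" where
  "regular_measure X N \<longleftrightarrow> (\<forall>A \<in> sets N.
     emeasure N A = (INF U \<in> {U. openin X U \<and> A \<subseteq> U}. emeasure N U) \<and>
     emeasure N A = (SUP K \<in> {K. compactin X K \<and> K \<subseteq> A}. emeasure N K))"

text \<open>For finite measures this is equivalent to regularity, and unlike regularity it is
  evidently preserved under finite sums.\<close>
definition eps_regular :: "'a topology \<Rightarrow> 'a measure \<Rightarrow> bool" where
  "eps_regular X N \<longleftrightarrow> (\<forall>A \<in> sets N. \<forall>e > 0. \<exists>U K. openin X U \<and> compactin X K \<and>
     K \<subseteq> A \<and> A \<subseteq> U \<and> emeasure N (U - K) < ennreal e)"

lemma eps_regularD:
  assumes "eps_regular X N" "A \<in> sets N" "0 < e"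
  obtains U K where "openin X U" "compactin X K" "K \<subseteq> A" "A \<subseteq> U" "emeasure N (U - K) < ennreal e"
  using assms(1)[unfolded eps_regular_def, rule_format, OF assms(2,3)] that by blast

context
  fixes X :: "'a topology" and N :: "'a measure"
  assumes N: "sets N = sets (borel_of X)" and X: "Hausdorff_space X" and eps: "eps_regular X N"
begin

lemma eps_regular_outer:
  assumes A: "A \<in> sets N"
  shows "emeasure N A = (INF U \<in> {U. openin X U \<and> A \<subseteq> U}. emeasure N U)"
proof (rule antisym)
  show "emeasure N A \<le> (INF U \<in> {U. openin X U \<and> A \<subseteq> U}. emeasure N U)"
  proof (rule INF_greatest)
    fix U assume "U \<in> {U. openin X U \<and> A \<subseteq> U}"
    then show "emeasure N A \<le> emeasure N U"
      using openin_in_sets_borel_of[OF N] by (simp add: emeasure_mono)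
  qed
  show "(INF U \<in> {U. openin X U \<and> A \<subseteq> U}. emeasure N U) \<le> emeasure N A"
  proof (rule ennreal_le_epsilon)
    fix e :: real assume "0 < e"
    obtain U K where UK: "openin X U" "compactin X K" "K \<subseteq> A" "A \<subseteq> U"
      "emeasure N (U - K) < ennreal e"
      using eps A \<open>0 < e\<close> by (rule eps_regularD)
    have "U - K \<in> sets N"
      using UK openin_in_sets_borel_of[OF N] compactin_in_sets_borel_of[OF N X] by blast
    moreover have "A \<union> (U - K) = U"
      using UK by blast
    ultimately have "(INF U \<in> {U. openin X U \<and> A \<subseteq> U}. emeasure N U) \<le> emeasure N A + emeasure N (U - K)"
      using UK A emeasure_subadditive[OF A, of "U - K"] by (metis (mono_tags) INF_lower2 mem_Collect_eq)
    also have "\<dots> \<le> emeasure N A + ennreal e"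
      using UK(5) by (intro add_left_mono less_imp_le)
    finally show "(INF U \<in> {U. openin X U \<and> A \<subseteq> U}. emeasure N U) \<le> emeasure N A + ennreal e" .
  qed
qed

lemma eps_regular_inner:
  assumes A: "A \<in> sets N"
  shows "emeasure N A = (SUP K \<in> {K. compactin X K \<and> K \<subseteq> A}. emeasure N K)"
proof (rule antisym)
  show "(SUP K \<in> {K. compactin X K \<and> K \<subseteq> A}. emeasure N K) \<le> emeasure N A"
  proof (rule SUP_least)
    fix K assume "K \<in> {K. compactin X K \<and> K \<subseteq> A}"
    then show "emeasure N K \<le> emeasure N A"
      using A by (simp add: emeasure_mono)
  qed
  show "emeasure N A \<le> (SUP K \<in> {K. compactin X K \<and> K \<subseteq> A}. emeasure N K)"
  proof (rule ennreal_le_epsilon)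
    fix e :: real assume "0 < e"
    obtain U K where UK: "openin X U" "compactin X K" "K \<subseteq> A" "A \<subseteq> U"
      "emeasure N (U - K) < ennreal e"
      using eps A \<open>0 < e\<close> by (rule eps_regularD)
    have sets: "K \<in> sets N" "U - K \<in> sets N" "U \<in> sets N"
      using UK openin_in_sets_borel_of[OF N] compactin_in_sets_borel_of[OF N X] by blast+
    have "K \<union> (U - K) = U"
      using UK by blast
    then have "emeasure N A \<le> emeasure N (K \<union> (U - K))"
      using UK sets(3) by (simp add: emeasure_mono)
    also have "\<dots> \<le> emeasure N K + emeasure N (U - K)"
      using sets(1,2) by (rule emeasure_subadditive)
    also have "\<dots> \<le> (SUP K \<in> {K. compactin X K \<and> K \<subseteq> A}. emeasure N K) + ennreal e"
    proof (rule add_mono)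
      show "emeasure N K \<le> (SUP K \<in> {K. compactin X K \<and> K \<subseteq> A}. emeasure N K)"
        using UK by (intro SUP_upper) simp
    qed (use UK(5) in \<open>rule less_imp_le\<close>)
    finally show "emeasure N A \<le> (SUP K \<in> {K. compactin X K \<and> K \<subseteq> A}. emeasure N K) + ennreal e" .
  qed
qed

lemma eps_regular_imp_regular_measure: "regular_measure X N"
  unfolding regular_measure_def using eps_regular_outer eps_regular_inner by blast

end

lemma eps_regular_common_sandwich:
  fixes N :: "'i \<Rightarrow> 'a measure"
  assumes I: "finite I" "I \<noteq> {}" and N: "\<And>i. i \<in> I \<Longrightarrow> sets (N i) = sets (borel_of X)"
    and X: "Hausdorff_space X" and eps: "\<And>i. i \<in> I \<Longrightarrow> eps_regular X (N i)"
    and A: "\<And>i. i \<in> I \<Longrightarrow> A \<in> sets (N i)" and "0 < e"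
  obtains U K where "openin X U" "compactin X K" "K \<subseteq> A" "A \<subseteq> U"
    "\<forall>i\<in>I. emeasure (N i) (U - K) < ennreal e"
proof -
  have "\<forall>i\<in>I. \<exists>U K. openin X U \<and> compactin X K \<and> K \<subseteq> A \<and> A \<subseteq> U \<and>
      emeasure (N i) (U - K) < ennreal e"
    using eps A \<open>0 < e\<close> by (metis eps_regularD)
  then obtain U K where UK: "\<And>i. i \<in> I \<Longrightarrow> openin X (U i) \<and> compactin X (K i) \<and>
      K i \<subseteq> A \<and> A \<subseteq> U i \<and> emeasure (N i) (U i - K i) < ennreal e"
    by metis
  have "emeasure (N i) ((\<Inter>i\<in>I. U i) - (\<Union>i\<in>I. K i)) < ennreal e" if "i \<in> I" for i
  proof -
    have "emeasure (N i) ((\<Inter>i\<in>I. U i) - (\<Union>i\<in>I. K i)) \<le> emeasure (N i) (U i - K i)"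
      using that UK[OF that] openin_in_sets_borel_of[OF N] compactin_in_sets_borel_of[OF N X]
      by (intro emeasure_mono) auto
    then show ?thesis
      using UK[OF that] by (meson order.strict_trans1)
  qed
  moreover have "openin X (\<Inter>i\<in>I. U i)" "compactin X (\<Union>i\<in>I. K i)"
    using UK I by (auto intro: compactin_Union)
  ultimately show ?thesis
    using that UK I by blast
qed

lemma regular_measure_imp_eps_regular:
  assumes N: "sets N = sets (borel_of X)" and X: "Hausdorff_space X"
    and "finite_measure N" and reg: "regular_measure X N"
  shows "eps_regular X N"
  unfolding eps_regular_def
proof (intro ballI allI impI)
  interpret finite_measure N by fact
  fix A and e :: real assume A: "A \<in> sets N" and "0 < e"
  have outer: "emeasure N A = (INF U \<in> {U. openin X U \<and> A \<subseteq> U}. emeasure N U)"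
    and inner: "emeasure N A = (SUP K \<in> {K. compactin X K \<and> K \<subseteq> A}. emeasure N K)"
    using reg A unfolding regular_measure_def by auto
  have "(INF U \<in> {U. openin X U \<and> A \<subseteq> U}. emeasure N U) < ennreal (measure N A + e / 2)"
    unfolding outer[symmetric] using \<open>0 < e\<close> by (simp add: emeasure_eq_measure ennreal_lessI)
  then obtain U where U: "openin X U" "A \<subseteq> U" "measure N U < measure N A + e / 2"
    by (auto simp: INF_less_iff emeasure_eq_measure ennreal_less_iff)
  obtain K where K: "compactin X K" "K \<subseteq> A" "measure N A - e / 2 < measure N K"
  proof (cases "measure N A < e / 2")
    case True
    then show ?thesis
      using that[of "{}"] by simp
  next
    case False
    then have "ennreal (measure N A - e / 2) < (SUP K \<in> {K. compactin X K \<and> K \<subseteq> A}. emeasure N K)"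
      unfolding inner[symmetric] using \<open>0 < e\<close> by (simp add: emeasure_eq_measure ennreal_lessI)
    then show ?thesis
      using that False by (auto simp: less_SUP_iff emeasure_eq_measure ennreal_less_iff)
  qed
  have "U \<in> sets N" "K \<in> sets N"
    using U(1) K(1) openin_in_sets_borel_of[OF N] compactin_in_sets_borel_of[OF N X] by auto
  then have "measure N (U - K) = measure N U - measure N K"
    using K(2) U(2) by (intro finite_measure_Diff) auto
  then have "emeasure N (U - K) < ennreal e"
    using U(3) K(3) \<open>0 < e\<close> by (simp add: emeasure_eq_measure ennreal_lessI)
  then show "\<exists>U K. openin X U \<and> compactin X K \<and> K \<subseteq> A \<and> A \<subseteq> U \<and> emeasure N (U - K) < ennreal e"
    using U K by blast
qed

lemma emeasure_density_le_1:
  assumes "f \<in> borel_measurable N" "\<And>x. x \<in> space N \<Longrightarrow> f x \<le> 1" "A \<in> sets N"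
  shows "emeasure (density N f) A \<le> emeasure N A"
proof -
  have "emeasure (density N f) A = (\<integral>\<^sup>+ x. f x * indicator A x \<partial>N)"
    using assms(1,3) by (rule emeasure_density)
  also have "\<dots> \<le> (\<integral>\<^sup>+ x. indicator A x \<partial>N)"
    using assms(2) by (intro nn_integral_mono) (simp add: indicator_def)
  finally show ?thesis
    using assms(3) by simp
qed

lemma eps_regular_density:
  assumes N: "sets N = sets (borel_of X)" and X: "Hausdorff_space X" and eps: "eps_regular X N"
    and f: "f \<in> borel_measurable N" and f_le_1: "\<And>x. x \<in> space N \<Longrightarrow> f x \<le> 1"
  shows "eps_regular X (density N f)"
  unfolding eps_regular_def
proof (intro ballI allI impI)
  fix A and e :: real assume "A \<in> sets (density N f)" and "0 < e"
  then obtain U K where UK: "openin X U" "compactin X K" "K \<subseteq> A" "A \<subseteq> U"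
    "emeasure N (U - K) < ennreal e"
    using eps by (auto elim: eps_regularD)
  have "U - K \<in> sets N"
    using UK openin_in_sets_borel_of[OF N] compactin_in_sets_borel_of[OF N X] by auto
  then have "emeasure (density N f) (U - K) < ennreal e"
    using f f_le_1 UK(5) by (meson emeasure_density_le_1 order.strict_trans1)
  then show "\<exists>U K. openin X U \<and> compactin X K \<and> K \<subseteq> A \<and> A \<subseteq> U \<and>
      emeasure (density N f) (U - K) < ennreal e"
    using UK by blast
qed

lemma eps_regular_distr_homeomorphic:
  assumes N: "sets N = sets (borel_of X)" and N': "sets N' = sets (borel_of Y)"
    and X: "Hausdorff_space X" and Y: "Hausdorff_space Y"
    and g: "homeomorphic_map X Y g" and eps: "eps_regular X N"
  shows "eps_regular Y (distr N N' g)"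
  unfolding eps_regular_def
proof (intro ballI allI impI)
  have space: "space N = topspace X" "space N' = topspace Y"
    using sets_eq_imp_space_eq[OF N] sets_eq_imp_space_eq[OF N'] by (simp_all add: space_borel_of)
  have g_meas: "g \<in> measurable N N'"
    using continuous_map_measurable_borel_of[OF homeomorphic_imp_continuous_map[OF g]]
    by (simp add: N N' cong: measurable_cong_sets)
  fix A and e :: real assume A: "A \<in> sets (distr N N' g)" and "0 < e"
  then have "g -` A \<inter> space N \<in> sets N"
    using g_meas by (simp add: measurable_sets)
  then obtain U K where UK: "openin X U" "compactin X K" "K \<subseteq> g -` A \<inter> space N"
    "g -` A \<inter> space N \<subseteq> U" "emeasure N (U - K) < ennreal e"
    using eps \<open>0 < e\<close> by (auto elim: eps_regularD)
  have U': "openin Y (g ` U)"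
    using homeomorphic_imp_open_map[OF g] UK(1) by (simp add: open_map_def)
  have K': "compactin Y (g ` K)"
    using UK(2) homeomorphic_imp_continuous_map[OF g] by (rule image_compactin)
  have "A \<subseteq> g ` (g -` A \<inter> space N)"
    using A sets.sets_into_space space homeomorphic_imp_surjective_map[OF g] by fastforce
  then have "A \<subseteq> g ` U"
    using UK(4) by blast
  moreover have "g ` K \<subseteq> A"
    using UK(3) by auto
  moreover have "emeasure (distr N N' g) (g ` U - g ` K) < ennreal e"
  proof -
    have "g ` U - g ` K \<in> sets N'" "U - K \<in> sets N"
      using U' K' UK(1,2) openin_in_sets_borel_of compactin_in_sets_borel_of N N' X Y
      by (metis sets.Diff)+
    moreover have "g -` (g ` U - g ` K) \<inter> space N \<subseteq> U - K"
      using homeomorphic_imp_injective_map[OF g] openin_subset[OF UK(1)] space(1)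
      by (auto simp: inj_on_def)
    ultimately have "emeasure (distr N N' g) (g ` U - g ` K) \<le> emeasure N (U - K)"
      using g_meas by (simp add: emeasure_distr emeasure_mono)
    then show ?thesis
      using UK(5) by (rule order.strict_trans1)
  qed
  ultimately show "\<exists>U K. openin Y U \<and> compactin Y K \<and> K \<subseteq> A \<and> A \<subseteq> U \<and>
      emeasure (distr N N' g) (U - K) < ennreal e"
    using U' K' by blast
qed

lemma eps_regular_return:
  assumes N: "sets N = sets (borel_of X)" and X: "t1_space X" and p: "p \<in> topspace X"
  shows "eps_regular X (return N p)"
  unfolding eps_regular_def
proof (intro ballI allI impI)
  fix A and e :: real assume A: "A \<in> sets (return N p)" and "0 < e"
  have A_sub: "A \<subseteq> topspace X"
    using A sets.sets_into_space sets_eq_imp_space_eq[OF N] by (fastforce simp: space_borel_of)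
  have open_compl: "openin X (topspace X - {p})"
    using X by (simp add: t1_space_openin_delete_alt)
  then have "emeasure (return N p) (topspace X - {p}) = 0"
    using openin_in_sets_borel_of[OF N] by simp
  then have null: "emeasure (return N p) (topspace X - {p}) < ennreal e"
    using \<open>0 < e\<close> by simp
  show "\<exists>U K. openin X U \<and> compactin X K \<and> K \<subseteq> A \<and> A \<subseteq> U \<and>
      emeasure (return N p) (U - K) < ennreal e"
  proof (cases "p \<in> A")
    case True
    then show ?thesis
      using null p A_sub by (intro exI[of _ "topspace X"] exI[of _ "{p}"]) auto
  next
    case False
    then show ?thesis
      using null open_compl A_sub by (intro exI[of _ "topspace X - {p}"] exI[of _ "{}"]) auto
  qed
qed

section \<open>Finite sums of measures\<close>

text \<open>The bind over the counting measure is the sum \<open>\<Sum>i\<in>I. N i\<close> only when every \<open>N i\<close> is a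
  subprobability measure on a common measurable space.\<close>
definition sum_measures :: "'i set \<Rightarrow> ('i \<Rightarrow> 'a measure) \<Rightarrow> 'a measure" where
  "sum_measures I N = count_space I \<bind> N"

context
  fixes I :: "'i set" and N :: "'i \<Rightarrow> 'a measure" and B :: "'a measure"
  assumes I: "finite I" "I \<noteq> {}"
    and sets_N: "\<And>i. i \<in> I \<Longrightarrow> sets (N i) = sets B"
    and subprob_N: "\<And>i. i \<in> I \<Longrightarrow> subprob_space (N i)"
begin

lemma measurable_sum_measures_family: "N \<in> measurable (count_space I) (subprob_algebra B)"
  using sets_N subprob_N by (auto simp: space_subprob_algebra)

lemma sets_sum_measures: "sets (sum_measures I N) = sets B"
  unfolding sum_measures_def using I sets_N by (intro sets_bind) auto

lemma emeasure_sum_measures: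
  assumes "A \<in> sets B"
  shows "emeasure (sum_measures I N) A = (\<Sum>i\<in>I. emeasure (N i) A)"
  unfolding sum_measures_def
  using I measurable_sum_measures_family assms
  by (simp add: emeasure_bind[where N = B] nn_integral_count_space_finite)

lemma finite_measure_sum_measures: "finite_measure (sum_measures I N)"
proof (rule finite_measureI)
  have "space (sum_measures I N) \<in> sets B"
    using sets_sum_measures by (metis sets.top)
  then have "emeasure (sum_measures I N) (space (sum_measures I N)) =
      (\<Sum>i\<in>I. emeasure (N i) (space (sum_measures I N)))"
    by (rule emeasure_sum_measures)
  also have "\<dots> \<noteq> \<infinity>"
    using I(1) subprob_N by (simp add: subprob_space.emeasure_subprob_space_less_top less_top)
  finally show "emeasure (sum_measures I N) (space (sum_measures I N)) \<noteq> \<infinity>" .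
qed

lemma integral_sum_measures:
  fixes f :: "'a \<Rightarrow> real"
  assumes "f \<in> borel_measurable B" and "\<And>x. x \<in> space B \<Longrightarrow> \<bar>f x\<bar> \<le> C"
  shows "integral\<^sup>L (sum_measures I N) f = (\<Sum>i\<in>I. integral\<^sup>L (N i) f)"
proof -
  have "integral\<^sup>L (sum_measures I N) f = (\<integral>i. integral\<^sup>L (N i) f \<partial>count_space I)"
    unfolding sum_measures_def using assms measurable_sum_measures_family I(1) subprob_N
    by (intro integral_bind[where B' = 1])
      (auto simp: finite_measure_count_space subprob_space.subprob_emeasure_le_1)
  then show ?thesis
    using I(1) by (simp add: lebesgue_integral_count_space_finite)
qed

lemma eps_regular_sum_measures:
  assumes B: "sets B = sets (borel_of X)" and X: "Hausdorff_space X"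
    and eps: "\<And>i. i \<in> I \<Longrightarrow> eps_regular X (N i)"
  shows "eps_regular X (sum_measures I N)"
  unfolding eps_regular_def
proof (intro ballI allI impI)
  fix A and e :: real assume A: "A \<in> sets (sum_measures I N)" and "0 < e"
  define e' where "e' = e / (2 * card I)"
  have "0 < e'"
    using \<open>0 < e\<close> I by (simp add: e'_def card_gt_0_iff)
  have sets_N_X: "sets (N i) = sets (borel_of X)" if "i \<in> I" for i
    using that sets_N B by simp
  have A_N: "A \<in> sets (N i)" if "i \<in> I" for i
    using A that sets_N sets_sum_measures by simp
  obtain U K where UK: "openin X U" "compactin X K" "K \<subseteq> A" "A \<subseteq> U"
    "\<forall>i\<in>I. emeasure (N i) (U - K) < ennreal e'"
    by (rule eps_regular_common_sandwich[OF I sets_N_X X eps A_N \<open>0 < e'\<close>])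
  have "U - K \<in> sets B"
    using UK openin_in_sets_borel_of[OF B] compactin_in_sets_borel_of[OF B X] by auto
  then have "emeasure (sum_measures I N) (U - K) = (\<Sum>i\<in>I. emeasure (N i) (U - K))"
    by (rule emeasure_sum_measures)
  also have "\<dots> \<le> (\<Sum>i\<in>I. ennreal e')"
    using UK(5) by (intro sum_mono) auto
  also have "\<dots> = ennreal (e / 2)"
    using I \<open>0 < e'\<close> by (simp add: e'_def ennreal_of_nat_eq_real_of_nat ennreal_mult'[symmetric])
  also have "\<dots> < ennreal e"
    using \<open>0 < e\<close> by (simp add: ennreal_lessI)
  finally show "\<exists>U K. openin X U \<and> compactin X K \<and> K \<subseteq> A \<and> A \<subseteq> U \<and>
      emeasure (sum_measures I N) (U - K) < ennreal e"
    using UK by blast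
qed

end

section \<open>The dual group\<close>

lemma topspace_dual_topology: "topspace dual_topology = dual_group"
proof -
  have "dual_group \<in> {{\<gamma> \<in> dual_group. \<gamma> ` K \<subseteq> U} | K U. compact K \<and> open U}"
    by (rule CollectI, rule exI[of _ "{}"], rule exI[of _ UNIV]) auto
  then show ?thesis
    unfolding dual_topology_def topology_generated_by_topspace by blast
qed

lemma openin_dual_topology_compact_open:
  assumes "compact K" "open U"
  shows "openin dual_topology {\<gamma> \<in> dual_group. \<gamma> ` K \<subseteq> U}"
  unfolding dual_topology_def using assms by (intro topology_generated_by_Basis) blast

lemma continuous_map_dual_eval: "continuous_map dual_topology euclidean (\<lambda>\<gamma>. \<gamma> x)"
  unfolding continuous_map_def topspace_dual_topology
  using openin_dual_topology_compact_open[OF compact_sing[of x]] by simp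

lemma Hausdorff_space_dual_topology: "Hausdorff_space dual_topology"
  unfolding Hausdorff_space_def topspace_dual_topology
proof (intro allI impI, elim conjE)
  fix \<gamma>1 \<gamma>2 :: "'a \<Rightarrow> complex" assume "\<gamma>1 \<in> dual_group" "\<gamma>2 \<in> dual_group" "\<gamma>1 \<noteq> \<gamma>2"
  then obtain z where "\<gamma>1 z \<noteq> \<gamma>2 z"
    by auto
  then obtain U V where "open U" "open V" "\<gamma>1 z \<in> U" "\<gamma>2 z \<in> V" "disjnt U V"
    by (metis hausdorff disjnt_def)
  then show "\<exists>U V. openin dual_topology U \<and> openin dual_topology V \<and> \<gamma>1 \<in> U \<and> \<gamma>2 \<in> V \<and> disjnt U V"
    using \<open>\<gamma>1 \<in> dual_group\<close> \<open>\<gamma>2 \<in> dual_group\<close>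
      openin_continuous_map_preimage[OF continuous_map_dual_eval[of z], of U]
      openin_continuous_map_preimage[OF continuous_map_dual_eval[of z], of V]
    by (intro exI[of _ "{\<gamma> \<in> dual_group. \<gamma> z \<in> U}"] exI[of _ "{\<gamma> \<in> dual_group. \<gamma> z \<in> V}"])
      (auto simp: topspace_dual_topology disjnt_def)
qed

lemma dual_borel_measure_iff: "dual_borel_measure M \<longleftrightarrow> sets M = sets (borel_of dual_topology)"
  unfolding dual_borel_measure_def sets_borel_of topspace_dual_topology
  by (metis sets_borel_of sets_eq_imp_space_eq space_borel_of topspace_dual_topology)

lemma dual_regular_iff: "dual_regular M \<longleftrightarrow> regular_measure dual_topology M"
  unfolding dual_regular_def regular_measure_def ..

lemma measurable_dual_eval:
  assumes "sets M = sets (borel_of dual_topology)"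
  shows "(\<lambda>\<gamma>. \<gamma> x) \<in> borel_measurable M"
  using continuous_map_measurable_borel_of[OF continuous_map_dual_eval[of x]]
  by (simp add: assms borel_of_euclidean cong: measurable_cong_sets)

lemma norm_dual_eval: "\<gamma> \<in> dual_group \<Longrightarrow> cmod (\<gamma> x) = 1"
  unfolding dual_group_def by blast

lemma one_in_dual_group: "(\<lambda>_. 1) \<in> dual_group"
  unfolding dual_group_def by auto

lemma dual_eval_uminus:
  assumes "\<gamma> \<in> dual_group"
  shows "\<gamma> (- x) = cnj (\<gamma> x)"
proof -
  have hom: "\<gamma> (a + b) = \<gamma> a * \<gamma> b" for a b
    using assms unfolding dual_group_def by blast
  have "\<gamma> 0 = 1"
    using hom[of 0 0] norm_dual_eval[OF assms, of 0] by (metis add_0 mult_cancel_left1 norm_zero zero_neq_one)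
  then have "\<gamma> x * \<gamma> (- x) = 1"
    using hom[of x "- x"] by simp
  moreover have "\<gamma> x * cnj (\<gamma> x) = 1"
    using norm_dual_eval[OF assms, of x] by (simp add: complex_norm_square[symmetric])
  ultimately show ?thesis
    by (metis mult.left_commute mult_1_right)
qed

lemma space_eq_dual_group: "sets M = sets (borel_of dual_topology) \<Longrightarrow> space M = dual_group"
  by (drule sets_eq_imp_space_eq) (simp add: space_borel_of topspace_dual_topology)

lemma one_in_space_dual: "sets M = sets (borel_of dual_topology) \<Longrightarrow> (\<lambda>_. 1) \<in> space M"
  using space_eq_dual_group one_in_dual_group by blast

definition cnj_char :: "('g \<Rightarrow> complex) \<Rightarrow> 'g \<Rightarrow> complex" where
  "cnj_char \<gamma> = (\<lambda>x. cnj (\<gamma> x))"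

lemma cnj_char_cnj_char [simp]: "cnj_char (cnj_char \<gamma>) = \<gamma>"
  unfolding cnj_char_def by simp

lemma cnj_char_in_dual_group: "\<gamma> \<in> dual_group \<Longrightarrow> cnj_char \<gamma> \<in> dual_group"
  unfolding dual_group_def cnj_char_def by (auto intro: continuous_on_cnj)

lemma continuous_map_cnj_char:
  "continuous_map (dual_topology :: ('g::topological_ab_group_add \<Rightarrow> complex) topology) dual_topology cnj_char"
proof -
  let ?S = "{{\<gamma> \<in> (dual_group :: ('g \<Rightarrow> complex) set). \<gamma> ` K \<subseteq> U} | K U. compact K \<and> open U}"
  have "continuous_map dual_topology (topology_generated_by ?S) cnj_char"
  proof (rule continuous_on_generated_topo)
    fix V assume "V \<in> ?S"
    then obtain K U where V: "V = {\<gamma> \<in> dual_group. \<gamma> ` K \<subseteq> U}" "compact K" "open U"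
      by blast
    have "open (cnj -` U)"
      using V(3) by (intro open_vimage continuous_on_cnj continuous_on_id)
    moreover have "cnj_char -` V \<inter> topspace dual_topology = {\<gamma> \<in> dual_group. \<gamma> ` K \<subseteq> cnj -` U}"
      unfolding V topspace_dual_topology using cnj_char_in_dual_group
      by (fastforce simp: cnj_char_def)
    ultimately show "openin dual_topology (cnj_char -` V \<inter> topspace dual_topology)"
      using openin_dual_topology_compact_open[OF V(2)] by simp
  next
    have "\<Union> ?S = dual_group"
      using topspace_dual_topology[where 'a = 'g]
      unfolding dual_topology_def topology_generated_by_topspace .
    then show "cnj_char ` topspace dual_topology \<subseteq> \<Union> ?S"
      using cnj_char_in_dual_group by (auto simp: topspace_dual_topology)
  qed
  then show ?thesis
    unfolding dual_topology_def .
qed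

lemma homeomorphic_map_cnj_char: "homeomorphic_map dual_topology dual_topology cnj_char"
  unfolding homeomorphic_map_maps homeomorphic_maps_def using continuous_map_cnj_char by auto

lemma measurable_cnj_char:
  "sets M = sets (borel_of dual_topology) \<Longrightarrow> cnj_char \<in> measurable M M"
  using continuous_map_measurable_borel_of[OF continuous_map_cnj_char]
  by (simp cong: measurable_cong_sets)

lemma fourier_stieltjes_real_odd:
  fixes \<phi> :: "'g::topological_ab_group_add \<Rightarrow> real"
  assumes M: "sets M = sets (borel_of dual_topology)" "finite_measure M"
    and h: "h \<in> borel_measurable M" "\<And>\<gamma>. \<gamma> \<in> space M \<Longrightarrow> cmod (h \<gamma>) \<le> 1"
    and \<phi>: "\<And>x. complex_of_real (\<phi> x) = fourier_stieltjes M h x"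
    and odd: "\<And>x. \<phi> (- x) = - \<phi> x"
  shows "\<phi> x = (LINT \<gamma>|M. Im (h \<gamma>) * Im (\<gamma> x))"
proof -
  interpret finite_measure M by fact
  have space: "space M = dual_group"
    using M(1) by (rule space_eq_dual_group)
  have integrable: "integrable M (\<lambda>\<gamma>. cnj (\<gamma> y) * h \<gamma>)" for y
  proof (rule integrable_const_bound[where B = 1])
    show "AE \<gamma> in M. norm (cnj (\<gamma> y) * h \<gamma>) \<le> 1"
      using h(2) by (intro AE_I2) (simp add: norm_mult space norm_dual_eval)
    show "(\<lambda>\<gamma>. cnj (\<gamma> y) * h \<gamma>) \<in> borel_measurable M"
      using measurable_compose[OF measurable_dual_eval[OF M(1)] borel_measurable_continuous_onI,
          OF continuous_on_cnj[OF continuous_on_id]] h(1)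
      by (intro borel_measurable_times) simp_all
  qed
  have Re_integral: "\<phi> y = (LINT \<gamma>|M. Re (cnj (\<gamma> y) * h \<gamma>))" for y
  proof -
    have "\<phi> y = Re (fourier_stieltjes M h y)"
      by (metis \<phi> Re_complex_of_real)
    then show ?thesis
      unfolding fourier_stieltjes_def by (simp only: integral_Re[OF integrable])
  qed
  have "2 * \<phi> x = \<phi> x - \<phi> (- x)"
    by (simp add: odd)
  also have "\<dots> = (LINT \<gamma>|M. Re (cnj (\<gamma> x) * h \<gamma>) - Re (cnj (\<gamma> (- x)) * h \<gamma>))"
    unfolding Re_integral
    by (intro Bochner_Integration.integral_diff[symmetric] integrable_Re integrable)
  also have "\<dots> = (LINT \<gamma>|M. 2 * (Im (h \<gamma>) * Im (\<gamma> x)))"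
    by (rule Bochner_Integration.integral_cong) (simp_all add: space dual_eval_uminus)
  finally show ?thesis
    by simp
qed

section \<open>The measure \<open>\<mu>\<close>\<close>

lemma subprob_space_density_le_1:
  assumes "subprob_space M" "f \<in> borel_measurable M" "\<And>x. x \<in> space M \<Longrightarrow> f x \<le> 1"
  shows "subprob_space (density M f)"
proof (rule subprob_spaceI)
  interpret subprob_space M by fact
  show "space (density M f) \<noteq> {}"
    using subprob_not_empty by simp
  have "emeasure (density M f) (space M) \<le> emeasure M (space M)"
    using assms(2,3) by (intro emeasure_density_le_1) auto
  then show "emeasure (density M f) (space (density M f)) \<le> 1"
    using subprob_emeasure_le_1[of "space M"] by simp
qed

lemma (in finite_measure) integrable_mult_bounded:
  fixes w g :: "'a \<Rightarrow> real"
  assumes "w \<in> borel_measurable M" "g \<in> borel_measurable M"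
    and "\<And>x. x \<in> space M \<Longrightarrow> \<bar>w x\<bar> \<le> 1" "\<And>x. x \<in> space M \<Longrightarrow> \<bar>g x\<bar> \<le> C"
  shows "integrable M (\<lambda>x. w x * g x)"
proof (rule integrable_const_bound[where B = C])
  show "AE x in M. norm (w x * g x) \<le> C"
    using assms(3,4) mult_mono[of _ 1 _ C] by (intro AE_I2) (simp add: abs_mult)
qed (use assms(1,2) in simp)

definition skew_components ::
  "('g::topological_ab_group_add \<Rightarrow> complex) measure \<Rightarrow> (('g \<Rightarrow> complex) \<Rightarrow> real) \<Rightarrow> nat \<Rightarrow> ('g \<Rightarrow> complex) measure"
  where "skew_components M s = nth
    [density M (\<lambda>\<gamma>. ennreal ((1 - s \<gamma>) / 2)),
     distr (density M (\<lambda>\<gamma>. ennreal ((1 + s \<gamma>) / 2))) M cnj_char,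
     density (return M (\<lambda>_. 1)) (\<lambda>_. ennreal (1 - measure M (space M)))]"

definition skew_measure ::
  "('g::topological_ab_group_add \<Rightarrow> complex) measure \<Rightarrow> (('g \<Rightarrow> complex) \<Rightarrow> real) \<Rightarrow> ('g \<Rightarrow> complex) measure"
  where "skew_measure M s = sum_measures {..<3} (skew_components M s)"

context
  fixes M :: "('g::topological_ab_group_add \<Rightarrow> complex) measure" and s :: "('g \<Rightarrow> complex) \<Rightarrow> real"
  assumes sets_M: "sets M = sets (borel_of dual_topology)"
    and finite_M: "finite_measure M" and mass_M: "measure M (space M) \<le> 1"
    and s_measurable: "s \<in> borel_measurable M" and s_bounded: "\<And>\<gamma>. \<gamma> \<in> space M \<Longrightarrow> \<bar>s \<gamma>\<bar> \<le> 1"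
begin

lemma skew_weights_bounds:
  assumes "\<gamma> \<in> space M"
  shows "0 \<le> (1 - s \<gamma>) / 2" "(1 - s \<gamma>) / 2 \<le> 1" "0 \<le> (1 + s \<gamma>) / 2" "(1 + s \<gamma>) / 2 \<le> 1"
  using s_bounded[OF assms] by (auto simp: abs_le_iff)

lemma sets_skew_components: "i < 3 \<Longrightarrow> sets (skew_components M s i) = sets M"
  by (auto simp: skew_components_def less_Suc_eq numeral_3_eq_3)

lemma subprob_space_skew_components: "i < 3 \<Longrightarrow> subprob_space (skew_components M s i)"
proof -
  have M: "subprob_space M"
    using finite_M mass_M space_eq_dual_group[OF sets_M] one_in_dual_group
    by (auto intro!: subprob_spaceI simp: finite_measure.emeasure_eq_measure)
  assume "i < 3"
  then show ?thesis
    using M s_measurable skew_weights_bounds mass_M measurable_cnj_char[OF sets_M] one_in_space_dual[OF sets_M]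
    by (auto simp: skew_components_def less_Suc_eq numeral_3_eq_3
        intro!: subprob_space_density_le_1 subprob_space.subprob_space_distr subprob_space_return)
qed

lemma sets_skew_measure: "sets (skew_measure M s) = sets M"
  unfolding skew_measure_def
  by (rule sets_sum_measures)
    (auto simp: sets_skew_components subprob_space_skew_components lessThan_empty_iff)

lemma integral_skew_measure_eq_sum:
  fixes f :: "('g \<Rightarrow> complex) \<Rightarrow> real"
  assumes f: "f \<in> borel_measurable M" "\<And>\<gamma>. \<gamma> \<in> space M \<Longrightarrow> \<bar>f \<gamma>\<bar> \<le> C"
  shows "(LINT \<gamma>|skew_measure M s. f \<gamma>) =
    (LINT \<gamma>|M. (1 - s \<gamma>) / 2 * f \<gamma>) + (LINT \<gamma>|M. (1 + s \<gamma>) / 2 * f (cnj_char \<gamma>)) +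
    (1 - measure M (space M)) * f (\<lambda>_. 1)"
proof -
  have cnj: "cnj_char \<in> measurable M M"
    using sets_M by (rule measurable_cnj_char)
  have nonneg: "AE \<gamma> in M. 0 \<le> (1 - s \<gamma>) / 2" "AE \<gamma> in M. 0 \<le> (1 + s \<gamma>) / 2"
    using skew_weights_bounds by auto
  have "(LINT \<gamma>|skew_measure M s. f \<gamma>) = (\<Sum>i<3. LINT \<gamma>|skew_components M s i. f \<gamma>)"
    unfolding skew_measure_def using f
    by (intro integral_sum_measures[where B = M])
      (auto simp: sets_skew_components subprob_space_skew_components lessThan_empty_iff)
  also have "\<dots> = (LINT \<gamma>|skew_components M s 0. f \<gamma>) + (LINT \<gamma>|skew_components M s 1. f \<gamma>) +
      (LINT \<gamma>|skew_components M s 2. f \<gamma>)"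
    by (simp add: eval_nat_numeral)
  also have "(LINT \<gamma>|skew_components M s 0. f \<gamma>) = (LINT \<gamma>|M. (1 - s \<gamma>) / 2 * f \<gamma>)"
    unfolding skew_components_def using f(1) s_measurable nonneg(1) by (simp add: integral_density)
  also have "(LINT \<gamma>|skew_components M s 1. f \<gamma>) = (LINT \<gamma>|M. (1 + s \<gamma>) / 2 * f (cnj_char \<gamma>))"
    unfolding skew_components_def using cnj f(1) s_measurable nonneg(2)
    by (simp add: integral_distr integral_density)
  also have "(LINT \<gamma>|skew_components M s 2. f \<gamma>) = (1 - measure M (space M)) * f (\<lambda>_. 1)"
    unfolding skew_components_def using f(1) mass_M one_in_space_dual[OF sets_M]
    by (simp add: integral_density integral_return)
  finally show ?thesis .
qed

lemma integral_skew_measure: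
  fixes f :: "('g \<Rightarrow> complex) \<Rightarrow> real"
  assumes f: "f \<in> borel_measurable M" "\<And>\<gamma>. \<gamma> \<in> space M \<Longrightarrow> \<bar>f \<gamma>\<bar> \<le> C"
  shows "(LINT \<gamma>|skew_measure M s. f \<gamma>) =
    (LINT \<gamma>|M. (1 - s \<gamma>) / 2 * f \<gamma> + (1 + s \<gamma>) / 2 * f (cnj_char \<gamma>)) +
    (1 - measure M (space M)) * f (\<lambda>_. 1)"
proof -
  interpret finite_measure M by (rule finite_M)
  have cnj: "cnj_char \<in> measurable M M"
    using sets_M by (rule measurable_cnj_char)
  have "integrable M (\<lambda>\<gamma>. (1 - s \<gamma>) / 2 * f \<gamma>)"
    using s_measurable f skew_weights_bounds by (intro integrable_mult_bounded) auto
  moreover have "integrable M (\<lambda>\<gamma>. (1 + s \<gamma>) / 2 * f (cnj_char \<gamma>))"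
    using s_measurable measurable_compose[OF cnj f(1)] f(2) measurable_space[OF cnj] skew_weights_bounds
    by (intro integrable_mult_bounded) auto
  ultimately show ?thesis
    using integral_skew_measure_eq_sum[OF f] by simp
qed

lemma finite_measure_skew_measure: "finite_measure (skew_measure M s)"
  unfolding skew_measure_def
  by (rule finite_measure_sum_measures)
    (auto simp: sets_skew_components subprob_space_skew_components lessThan_empty_iff)

lemma emeasure_space_skew_measure: "emeasure (skew_measure M s) (space (skew_measure M s)) = 1"
proof -
  interpret finite_measure M by (rule finite_M)
  have "measure (skew_measure M s) (space (skew_measure M s)) = (LINT \<gamma>|skew_measure M s. 1)"
    by simp
  also have "\<dots> = (LINT \<gamma>|M. (1 - s \<gamma>) / 2 + (1 + s \<gamma>) / 2) + (1 - measure M (space M))"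
    using integral_skew_measure[of "\<lambda>_. 1" 1] by simp
  also have "\<dots> = 1"
    by (simp add: add_divide_distrib[symmetric])
  finally show ?thesis
    using finite_measure.emeasure_eq_measure[OF finite_measure_skew_measure] by simp
qed

lemma regular_measure_skew_measure:
  assumes "regular_measure dual_topology M"
  shows "regular_measure dual_topology (skew_measure M s)"
proof -
  have eps_M: "eps_regular dual_topology M"
    using sets_M Hausdorff_space_dual_topology finite_M assms by (rule regular_measure_imp_eps_regular)
  have density: "eps_regular dual_topology (density M (\<lambda>\<gamma>. ennreal ((1 + c * s \<gamma>) / 2)))"
    if "c = 1 \<or> c = -1" for c
    using sets_M Hausdorff_space_dual_topology eps_M s_measurable s_bounded that
    by (intro eps_regular_density) (auto simp: abs_le_iff)
  have "eps_regular dual_topology (skew_components M s i)" if "i < 3" for i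
  proof -
    have "i = 0 \<or> i = 1 \<or> i = 2"
      using that by auto
    moreover have "eps_regular dual_topology (distr (density M (\<lambda>\<gamma>. ennreal ((1 + s \<gamma>) / 2))) M cnj_char)"
      using sets_M Hausdorff_space_dual_topology homeomorphic_map_cnj_char density[of 1]
      by (intro eps_regular_distr_homeomorphic) auto
    moreover have "eps_regular dual_topology (density (return M (\<lambda>_. 1)) (\<lambda>_. ennreal (1 - measure M (space M))))"
      using sets_M Hausdorff_space_dual_topology mass_M one_in_dual_group
      by (intro eps_regular_density eps_regular_return Hausdorff_imp_t1_space)
        (auto simp: topspace_dual_topology)
    ultimately show ?thesis
      using density[of "-1"] by (auto simp: skew_components_def)
  qed
  then have "eps_regular dual_topology (skew_measure M s)"
    unfolding skew_measure_def using sets_M Hausdorff_space_dual_topology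
    by (intro eps_regular_sum_measures[where B = M])
      (auto simp: sets_skew_components subprob_space_skew_components lessThan_empty_iff)
  then show ?thesis
    using sets_skew_measure sets_M Hausdorff_space_dual_topology
    by (intro eps_regular_imp_regular_measure) auto
qed

lemma Im_fourier_stieltjes_skew_measure:
  "Im (fourier_stieltjes (skew_measure M s) (\<lambda>_. 1) x) = (LINT \<gamma>|M. s \<gamma> * Im (\<gamma> x))"
proof -
  interpret finite_measure "skew_measure M s" by (rule finite_measure_skew_measure)
  have eval: "(\<lambda>\<gamma>. \<gamma> x) \<in> borel_measurable M"
    using sets_M by (rule measurable_dual_eval)
  have "integrable (skew_measure M s) (\<lambda>\<gamma>. \<gamma> x)"
    using eval sets_skew_measure
    by (intro integrable_const_bound[where B = 1] AE_I2)
      (auto simp: space_eq_dual_group[OF sets_M] norm_dual_eval cong: measurable_cong_sets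
        dest: sets_eq_imp_space_eq)
  then have "Im (fourier_stieltjes (skew_measure M s) (\<lambda>_. 1) x) = (LINT \<gamma>|skew_measure M s. - Im (\<gamma> x))"
    by (simp add: fourier_stieltjes_def)
  also have "\<dots> = (LINT \<gamma>|M. (1 - s \<gamma>) / 2 * - Im (\<gamma> x) + (1 + s \<gamma>) / 2 * Im (\<gamma> x))"
    using eval space_eq_dual_group[OF sets_M]
    by (subst integral_skew_measure[where C = 1])
      (auto simp: cnj_char_def norm_dual_eval abs_Im_le_cmod[THEN order_trans])
  also have "\<dots> = (LINT \<gamma>|M. s \<gamma> * Im (\<gamma> x))"
    by (rule Bochner_Integration.integral_cong) (simp_all add: field_simps)
  finally show ?thesis .
qed

end

theorem theorem1:
  fixes \<phi> :: "'g::{topological_ab_group_add, t2_space} \<Rightarrow> real"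
  assumes "locally_compact_space (euclidean :: 'g topology)"
    and "\<forall>x. \<phi> (- x) = - \<phi> x"
    and "B_norm_le (\<lambda>x. complex_of_real (\<phi> x)) 1"
  shows "\<exists>f :: 'g \<Rightarrow> complex. characteristic_function f \<and> (\<forall>x. Im (f x) = \<phi> x)"
proof -
  obtain M h where M: "dual_borel_measure M" "dual_regular M" "finite_measure M" "measure M (space M) \<le> 1"
    and h: "h \<in> borel_measurable M" "\<forall>\<gamma> \<in> space M. cmod (h \<gamma>) = 1"
    and \<phi>: "\<forall>x. complex_of_real (\<phi> x) = fourier_stieltjes M h x"
    using assms(3) unfolding B_norm_le_def by blast
  have sets_M: "sets M = sets (borel_of dual_topology)"
    using M(1) by (simp add: dual_borel_measure_iff)
  have \<phi>_eq: "\<phi> x = (LINT \<gamma>|M. Im (h \<gamma>) * Im (\<gamma> x))" for x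
    using sets_M M(3) h \<phi> assms(2) by (intro fourier_stieltjes_real_odd) auto
  have Im_h: "Im \<circ> h \<in> borel_measurable M" "\<And>\<gamma>. \<gamma> \<in> space M \<Longrightarrow> \<bar>(Im \<circ> h) \<gamma>\<bar> \<le> 1"
    using h by (auto simp: abs_Im_le_cmod[THEN order_trans])
  define \<mu> where "\<mu> = skew_measure M (Im \<circ> h)"
  have "dual_borel_measure \<mu>" "dual_regular \<mu>" "emeasure \<mu> (space \<mu>) = 1"
    unfolding \<mu>_def dual_borel_measure_iff dual_regular_iff using sets_M M Im_h
    by (simp_all add: sets_skew_measure dual_regular_iff regular_measure_skew_measure
        emeasure_space_skew_measure)
  then have "characteristic_function (fourier_stieltjes \<mu> (\<lambda>_. 1))"
    unfolding characteristic_function_def by blast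
  moreover have "Im (fourier_stieltjes \<mu> (\<lambda>_. 1) x) = \<phi> x" for x
    unfolding \<mu>_def \<phi>_eq using sets_M M Im_h
    by (subst Im_fourier_stieltjes_skew_measure) auto
  ultimately show ?thesis
    by blast
qed

end
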